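(* Let $k\ge1$, and let $n$ be a power of $2$ with $n>2^{k+7}$. There is a deterministic oblivious parallel algorithm that, given any array $A$ of $n$ elements each with a $k$-bit key such that $A$ is $(1-2^{-8k})$-uniform, outputs the dominant key of $A$; the algorithm uses $O(n)$ total work and $O(k+\log n)$ depth.
   Context: For $\epsilon\in(0,1/2)$, an array $A$ of length $n$ is $(1-\epsilon)$-uniform if all but at most $\epsilon n$ of its elements have the same key; this key is called the dominant key. (On inputs that are not uniform the output may be arbitrary.) A deterministic oblivious parallel algorithm is a PRAM algorithm whose memory access patterns are fixed in advance and depend only on the input length; total work is the total number of word operations, depth the number of parallel steps, with unit-cost operations on $O(\log n)$-bit words. *)

theory Defs
  imports Main
begin

text \<open>A model of deterministic oblivious (CREW) PRAM algorithms on w-bit words.  Every address read or written is fixed in the program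
  text, so the memory access pattern depends only on the program (i.e. on
  the input length), never on the data: the algorithm is oblivious.\<close>

datatype wop =
    WConst nat | WAdd | WSub | WMul | WDiv | WMod
  | WAnd | WOr | WXor | WShl | WShr | WLess | WEq | WSelect

record instr =
  dst :: nat
  opr :: wop
  src1 :: nat
  src2 :: nat
  src3 :: nat

type_synonym step = "instr list"
type_synonym program = "step list"
type_synonym memory = "nat \<Rightarrow> nat"

fun eval_op :: "nat \<Rightarrow> wop \<Rightarrow> nat \<Rightarrow> nat \<Rightarrow> nat \<Rightarrow> nat" where
  "eval_op w (WConst c) x y z = c mod 2 ^ w"
| "eval_op w WAdd x y z = (x + y) mod 2 ^ w"
| "eval_op w WSub x y z = (x + 2 ^ w - y mod 2 ^ w) mod 2 ^ w"
| "eval_op w WMul x y z = (x * y) mod 2 ^ w"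
| "eval_op w WDiv x y z = (x div y) mod 2 ^ w"
| "eval_op w WMod x y z = (x mod y) mod 2 ^ w"
| "eval_op w WAnd x y z = (and x y) mod 2 ^ w"
| "eval_op w WOr x y z = (or x y) mod 2 ^ w"
| "eval_op w WXor x y z = (xor x y) mod 2 ^ w"
| "eval_op w WShl x y z = (x * 2 ^ y) mod 2 ^ w"
| "eval_op w WShr x y z = (x div 2 ^ y) mod 2 ^ w"
| "eval_op w WLess x y z = (if x < y then 1 else 0)"
| "eval_op w WEq x y z = (if x = y then 1 else 0)"
| "eval_op w WSelect x y z = (if x \<noteq> 0 then y else z) mod 2 ^ w"

definition exec_instr :: "nat \<Rightarrow> memory \<Rightarrow> instr \<Rightarrow> memory \<Rightarrow> memory" where
  "exec_instr w M i M' =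
     M'(dst i := eval_op w (opr i) (M (src1 i)) (M (src2 i)) (M (src3 i)))"

text \<open>A parallel step: all instructions read the old memory M.\<close>
definition exec_step :: "nat \<Rightarrow> step \<Rightarrow> memory \<Rightarrow> memory" where
  "exec_step w s M = fold (exec_instr w M) s M"

definition run :: "nat \<Rightarrow> program \<Rightarrow> memory \<Rightarrow> memory" where
  "run w P M = fold (exec_step w) P M"

text \<open>Exclusive write: instructions of one step write distinct cells.\<close>
definition wf_program :: "program \<Rightarrow> bool" where
  "wf_program P \<longleftrightarrow> (\<forall>s\<in>set P. distinct (map dst s))"

definition work :: "program \<Rightarrow> nat" where
  "work P = sum_list (map length P)"

definition depth :: "program \<Rightarrow> nat" where
  "depth P = length P"

definition init_mem :: "nat list \<Rightarrow> memory" where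
  "init_mem A = (\<lambda>a. if a < length A then A ! a else 0)"

text \<open>A is (1-eps)-uniform with dominant key d, eps = 1/2^e:
  at most eps*n entries differ from d.\<close>
definition uniform_dom :: "nat \<Rightarrow> nat list \<Rightarrow> nat \<Rightarrow> bool" where
  "uniform_dom e A d \<longleftrightarrow> card {i. i < length A \<and> A ! i \<noteq> d} * 2 ^ e \<le> length A"

end

theory Submission
  imports Defs
begin

text \<open>With words of 2 log n bits the whole input can simply be added up: a balanced
  reduction tree of depth log n and n - 1 additions computes the sum S, which is
  below n 2^k.  At most n / 2^(8k) entries differ from the dominant key d and each
  deviates from d by less than 2^k, so S lies within n / 4 of d n; dividing by n
  with rounding (add n / 2, shift right by log n) therefore returns d.\<close>

lemma fold_exec_instr_map_dst_id:
  assumes "\<And>i. dst (f i) = i"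
  shows "fold (exec_instr w M) (map f xs) M0 a =
     (if a \<in> set xs then eval_op w (opr (f a)) (M (src1 (f a))) (M (src2 (f a))) (M (src3 (f a)))
      else M0 a)"
  using assms by (induction xs arbitrary: M0) (auto simp: exec_instr_def)

lemma run_append: "run w (P @ Q) M = run w Q (run w P M)"
  by (simp add: run_def)

definition fold_half_step :: "nat \<Rightarrow> step" where
  "fold_half_step h =
     map (\<lambda>i. \<lparr>dst = i, opr = WAdd, src1 = i, src2 = i + h, src3 = 0\<rparr>) [0..<h]"

fun sum_program :: "nat \<Rightarrow> program" where
  "sum_program 0 = []"
| "sum_program (Suc j) = fold_half_step (2 ^ j) # sum_program j"

lemma exec_fold_half_step:
  "exec_step w (fold_half_step h) M a = (if a < h then (M a + M (a + h)) mod 2 ^ w else M a)"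
  unfolding exec_step_def fold_half_step_def by (subst fold_exec_instr_map_dst_id) auto

lemma sum_lessThan_double:
  fixes M :: "nat \<Rightarrow> 'a::comm_monoid_add"
  shows "(\<Sum>i<2 * h. M i) = (\<Sum>i<h. M i + M (i + h))"
proof -
  have "(\<Sum>i<h + j. M i) = (\<Sum>i<h. M i) + (\<Sum>i<j. M (i + h))" for j
    by (induction j) (auto simp: add.commute add.left_commute)
  from this[of h] show ?thesis
    by (simp add: mult_2 sum.distrib)
qed

text \<open>No addition overflows because every partial sum is bounded by the total.\<close>

lemma sum_exec_fold_half_step:
  assumes sum: "(\<Sum>i<2 * h. M i) = S" and fits: "S < 2 ^ w"
  shows "(\<Sum>i<h. exec_step w (fold_half_step h) M i) = S"
proof -
  have pair_le: "M i + M (i + h) \<le> S" if "i < h" for i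
  proof -
    have "M i + M (i + h) \<le> (\<Sum>j<h. M j + M (j + h))"
      using that by (intro member_le_sum) auto
    with sum show ?thesis by (simp add: sum_lessThan_double)
  qed
  have "(\<Sum>i<h. exec_step w (fold_half_step h) M i) = (\<Sum>i<h. M i + M (i + h))"
    using fits by (intro sum.cong) (auto simp: exec_fold_half_step intro!: mod_less le_less_trans[OF pair_le])
  with sum show ?thesis by (simp add: sum_lessThan_double)
qed

lemma run_sum_program:
  assumes "(\<Sum>i<2 ^ j. M i) = S" and "S < 2 ^ w"
  shows "run w (sum_program j) M 0 = S"
  using assms
proof (induction j arbitrary: M)
  case 0
  then show ?case by (simp add: run_def)
next
  case (Suc j)
  then have "(\<Sum>i<2 ^ j. exec_step w (fold_half_step (2 ^ j)) M i) = S"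
    by (intro sum_exec_fold_half_step) (auto simp: mult.commute)
  with Suc.IH Suc.prems(2) show ?case
    by (simp add: run_def)
qed

lemma wf_sum_program: "wf_program (sum_program j)"
  by (induction j) (auto simp: wf_program_def fold_half_step_def comp_def)

lemma work_sum_program: "work (sum_program j) + 1 = 2 ^ j"
  by (induction j) (auto simp: work_def fold_half_step_def)

lemma depth_sum_program: "depth (sum_program j) = j"
  by (induction j) (auto simp: depth_def)

text \<open>Cells 2^m and 2^m + 1 lie just beyond an input of length 2^m and serve as scratch.\<close>

definition round_div_program :: "nat \<Rightarrow> program" where
  "round_div_program m =
     [[\<lparr>dst = 2 ^ m, opr = WConst (2 ^ (m - 1)), src1 = 0, src2 = 0, src3 = 0\<rparr>,
       \<lparr>dst = 2 ^ m + 1, opr = WConst m, src1 = 0, src2 = 0, src3 = 0\<rparr>],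
      [\<lparr>dst = 0, opr = WAdd, src1 = 0, src2 = 2 ^ m, src3 = 0\<rparr>],
      [\<lparr>dst = 0, opr = WShr, src1 = 0, src2 = 2 ^ m + 1, src3 = 0\<rparr>]]"

lemma run_round_div_program:
  assumes "M 0 + 2 ^ (m - 1) < 2 ^ w" and "m < 2 ^ w"
  shows "run w (round_div_program m) M 0 = (M 0 + 2 ^ (m - 1)) div 2 ^ m"
proof -
  have "(M 0 + 2 ^ (m - 1)) div 2 ^ m < 2 ^ w"
    using assms(1) div_le_dividend le_less_trans by blast
  moreover have "(2::nat) ^ (m - 1) < 2 ^ w"
    using assms(1) by linarith
  ultimately show ?thesis
    using assms
    by (simp add: run_def round_div_program_def exec_step_def exec_instr_def)
qed

lemma wf_round_div_program: "wf_program (round_div_program m)"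
  by (simp add: wf_program_def round_div_program_def)

lemma sum_list_dominant_bounds:
  fixes A :: "nat list"
  assumes len: "length A = 2 * h"
    and keys: "\<forall>x\<in>set A. x < K" and "d < K"
    and few_dev: "card {i. i < length A \<and> A ! i \<noteq> d} * K < h"
  shows "d * (2 * h) \<le> sum_list A + h" and "sum_list A + h < (d + 1) * (2 * h)"
proof -
  define B where "B = {i. i < length A \<and> A ! i \<noteq> d}"
  define G where "G = {i. i < length A \<and> A ! i = d}"
  have split: "{0..<length A} = B \<union> G" "B \<inter> G = {}" "finite B" "finite G"
    unfolding B_def G_def by auto
  have few: "card B * K < h"
    using few_dev by (simp add: B_def)
  have sum_A: "sum_list A = (\<Sum>i\<in>B. A ! i) + card G * d"
    unfolding sum_list_sum_nth split(1) sum.union_disjoint[OF split(3,4,2)]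
    by (simp add: G_def)
  have "card G + card B = card {0..<length A}"
    using card_Un_disjoint[OF split(3,4,2)] split(1) by simp
  then have card_G_B: "card G + card B = 2 * h"
    using len by simp
  have "(\<Sum>i\<in>B. A ! i) \<le> (\<Sum>i\<in>B. K)"
    using keys by (intro sum_mono) (auto simp: B_def intro: less_imp_le)
  then have sum_B: "(\<Sum>i\<in>B. A ! i) \<le> card B * K"
    by simp
  have "card B * d \<le> card B * K"
    using \<open>d < K\<close> by simp
  moreover have "d * (2 * h) = card G * d + card B * d"
    using card_G_B by (metis add_mult_distrib mult.commute)
  ultimately show "d * (2 * h) \<le> sum_list A + h"
    using sum_A few by linarith
  have "(d + 1) * (2 * h) = card G * d + card B * d + 2 * h"
    using card_G_B by (metis add_mult_distrib mult.commute mult_1 add_mult_distrib2)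
  then show "sum_list A + h < (d + 1) * (2 * h)"
    using sum_A sum_B few by linarith
qed

lemma uniform_dom_few_deviations:
  assumes "k \<ge> 1" and keys: "\<forall>x\<in>set A. x < 2 ^ k" and "A \<noteq> []"
    and u: "uniform_dom (8 * k) A d"
  shows "d < 2 ^ k" and "4 * (card {i. i < length A \<and> A ! i \<noteq> d} * 2 ^ k) \<le> length A"
proof -
  let ?b = "card {i. i < length A \<and> A ! i \<noteq> d}"
  have b_le: "?b * 2 ^ (8 * k) \<le> length A"
    using u by (simp add: uniform_dom_def)
  have "(2::nat) ^ (k + 2) \<le> 2 ^ (8 * k)"
    using \<open>k \<ge> 1\<close> by (intro power_increasing) auto
  then have "?b * 2 ^ (k + 2) \<le> length A"
    using b_le by (meson le_trans mult_le_mono2)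
  then show "4 * (?b * 2 ^ k) \<le> length A"
    by (simp add: power_add mult_ac)
  show "d < 2 ^ k"
  proof (rule ccontr)
    assume "\<not> d < 2 ^ k"
    then have "{i. i < length A \<and> A ! i \<noteq> d} = {..<length A}"
      using keys nth_mem by fastforce
    moreover have "(1::nat) < 2 ^ (8 * k)"
      using \<open>k \<ge> 1\<close> by (intro one_less_power) auto
    ultimately show False
      using b_le \<open>A \<noteq> []\<close> by simp
  qed
qed

lemma rounded_mean_uniform_dom:
  assumes "k \<ge> 1" and "m \<ge> 1" and len: "length A = 2 ^ m"
    and keys: "\<forall>x\<in>set A. x < 2 ^ k" and u: "uniform_dom (8 * k) A d"
  shows "(sum_list A + 2 ^ (m - 1)) div 2 ^ m = d"
    and "sum_list A + 2 ^ (m - 1) < 2 ^ (k + m)"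
proof -
  define h where "h = (2::nat) ^ (m - 1)"
  have n: "2 ^ m = 2 * h"
    using \<open>m \<ge> 1\<close> by (simp add: h_def power_eq_if)
  have "A \<noteq> []"
    using len by auto
  note dev = uniform_dom_few_deviations[OF \<open>k \<ge> 1\<close> keys this u]
  have "h > 0"
    by (simp add: h_def)
  with dev(2) len n have "card {i. i < length A \<and> A ! i \<noteq> d} * 2 ^ k < h"
    by linarith
  note bounds = sum_list_dominant_bounds[OF len[unfolded n] keys dev(1) this]
  then show "(sum_list A + 2 ^ (m - 1)) div 2 ^ m = d"
    unfolding n h_def[symmetric] by (intro div_nat_eqI) (auto simp: mult.commute)
  have "(d + 1) * 2 ^ m \<le> 2 ^ k * 2 ^ m"
    using dev(1) by (intro mult_le_mono1) simp
  with bounds(2) have "sum_list A + 2 ^ (m - 1) < 2 ^ k * 2 ^ m"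
    unfolding n h_def[symmetric] by linarith
  then show "sum_list A + 2 ^ (m - 1) < 2 ^ (k + m)"
    by (simp add: power_add)
qed

definition dominant_key_program :: "nat \<Rightarrow> program" where
  "dominant_key_program m = sum_program m @ round_div_program m"

lemma wf_dominant_key_program: "wf_program (dominant_key_program m)"
  using wf_sum_program[of m] wf_round_div_program[of m]
  by (auto simp: dominant_key_program_def wf_program_def)

lemma work_dominant_key_program: "work (dominant_key_program m) \<le> 4 * 2 ^ m"
  using work_sum_program[of m]
  by (simp add: dominant_key_program_def work_def round_div_program_def)

lemma depth_dominant_key_program: "depth (dominant_key_program m) = m + 3"
  using depth_sum_program[of m]
  by (simp add: dominant_key_program_def depth_def round_div_program_def)

lemma run_dominant_key_program:
  assumes "k \<ge> 1" and "k < m" and len: "length A = 2 ^ m"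
    and keys: "\<forall>x\<in>set A. x < 2 ^ k" and u: "uniform_dom (8 * k) A d"
  shows "run (2 * m) (dominant_key_program m) (init_mem A) 0 = d"
proof -
  have "m \<ge> 1"
    using \<open>k < m\<close> by simp
  note mean = rounded_mean_uniform_dom[OF \<open>k \<ge> 1\<close> this len keys u]
  have "(2::nat) ^ (k + m) \<le> 2 ^ (2 * m)"
    using \<open>k < m\<close> by (intro power_increasing) auto
  with mean(2) have fits: "sum_list A + 2 ^ (m - 1) < 2 ^ (2 * m)"
    by linarith
  have "(\<Sum>i<2 ^ m. init_mem A i) = sum_list A"
    using len by (simp add: init_mem_def sum_list_sum_nth atLeast0LessThan)
  then have "run (2 * m) (sum_program m) (init_mem A) 0 = sum_list A"
    using fits by (intro run_sum_program) auto
  moreover have "m < 2 ^ (2 * m)"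
  proof -
    have "m < 2 ^ m"
      by (rule less_exp)
    also have "(2::nat) ^ m \<le> 2 ^ (2 * m)"
      by (rule power_increasing) auto
    finally show ?thesis .
  qed
  ultimately show ?thesis
    using fits mean(1) \<open>k < m\<close>
    by (simp add: dominant_key_program_def run_append run_round_div_program)
qed

theorem mainTheorem7:
  shows "\<exists>(C::nat) (c::nat). \<forall>k m. k \<ge> 1 \<longrightarrow> 2 ^ m > (2::nat) ^ (k + 7) \<longrightarrow>
    (\<exists>P. wf_program P
       \<and> work P \<le> C * 2 ^ m
       \<and> depth P \<le> C * (k + m)
       \<and> (\<forall>A d. length A = 2 ^ m \<longrightarrow> (\<forall>x\<in>set A. x < 2 ^ k) \<longrightarrow>
              uniform_dom (8 * k) A d \<longrightarrow>
              run (c * m) P (init_mem A) 0 = d))"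
proof (rule exI[of _ 4], rule exI[of _ 2], intro allI impI)
  fix k m :: nat
  assume "k \<ge> 1" and "2 ^ m > (2::nat) ^ (k + 7)"
  then have "k + 7 < m"
    using power_less_imp_less_exp by fastforce
  then show "\<exists>P. wf_program P \<and> work P \<le> 4 * 2 ^ m \<and> depth P \<le> 4 * (k + m)
       \<and> (\<forall>A d. length A = 2 ^ m \<longrightarrow> (\<forall>x\<in>set A. x < 2 ^ k) \<longrightarrow>
              uniform_dom (8 * k) A d \<longrightarrow> run (2 * m) P (init_mem A) 0 = d)"
    using \<open>k \<ge> 1\<close> wf_dominant_key_program work_dominant_key_program
      depth_dominant_key_program run_dominant_key_program
    by (intro exI[of _ "dominant_key_program m"]) auto
qed

end
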